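(* Let $E(q)=\prod_{k\ge1}(1-q^k)$ and $$X=\frac{E(q^2)^4E(q^3)^8}{E(q)^8E(q^6)^4}.$$ Let $U$ be the operator on formal Laurent series defined by $U\left(\sum_{n\ge n_0}a_nq^n\right)=\sum_{3n\ge n_0}a_{3n}q^n$. Then \begin{align*} U(X)&=10X-36X^2+27X^3,\\ U(X^2)&=-8X+306X^2-2160X^3+5508X^4-5832X^5+2187X^6,\\ U(X^3)&=X-360X^2+10566X^3-99144X^4+423549X^5-944784X^6\\ &\qquad+1141614X^7-708588X^8+177147X^9. \end{align*}
   Context: All identities are identities of formal power series in $q$ (equivalently of holomorphic functions of $\tau$ in the upper half plane with $q=e^{2\pi i\tau}$). *)

theory Defs
  imports "HOL-Computational_Algebra.Formal_Power_Series"
begin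

text \<open>Euler product E(q) = prod_{k>=1} (1 - q^k) as a formal power series.
  Its n-th coefficient is the n-th coefficient of the finite partial product
  up to k = n (factors with k > n do not affect coefficients of degree <= n).\<close>
definition eulerE :: "rat fps" where
  "eulerE = Abs_fps (\<lambda>n. fps_nth (\<Prod>k\<in>{1..n}. (1 - fps_X ^ k :: rat fps)) n)"

definition eulerE_at :: "nat \<Rightarrow> rat fps" where
  "eulerE_at m = fps_compose eulerE (fps_X ^ m)"

definition Xser :: "rat fps" where
  "Xser = eulerE_at 2 ^ 4 * eulerE_at 3 ^ 8 * inverse (eulerE_at 1 ^ 8 * eulerE_at 6 ^ 4)"

text \<open>U operator: sum a_n q^n |-> sum a_{3n} q^n (on power series, n_0 = 0).\<close>
definition opU :: "rat fps \<Rightarrow> rat fps" where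
  "opU f = Abs_fps (\<lambda>n. fps_nth f (3 * n))"

end

theory Submission
  imports Defs
begin

text \<open>
  Let theta(q) = sum over j in Z of (-1)^j q^(j^2). Gauss's identity theta(q) = E(q)^2 / E(q^2)
  turns the series into X = (theta(q^3) / theta(q))^4. Trisecting, theta(q) = theta(q^9) + q b(q^3).
  Reading a(q^3) + q b(q^3) + q^2 c(q^3) as a + b t + c t^2 with t^3 = q, the cubic norm N is
  multiplicative, and on Euler products N(E(q^m)) E(q^(3m)) = E(q^m)^4 when 3 does not divide m;
  hence N(theta) theta(q^3) = theta^4. For T = theta(q) / theta(q^9) - 1 = q c(q^3) this amounts to
  X(q^3) (1 + T^3) = 1 and X (1 + T)^4 = 1 + T^3, whence X = X(q^3)^3 (1 - T + T^2)^4.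
  As U(f(q^3) g) = f U(g) and U(P(q c(q^3))) = U(P)(q c^3), with q c^3 = 1/X - 1, we get
  U(X^k) = X^(3k) U((1 - q + q^2)^(4k))(1/X - 1), and the three identities come from trisecting
  (1 - q + q^2)^4, (1 - q + q^2)^8 and (1 - q + q^2)^12.
\<close>

unbundle fps_syntax

section \<open>Truncation and dilation of power series\<close>

definition agree_below :: "nat \<Rightarrow> 'a::zero fps \<Rightarrow> 'a fps \<Rightarrow> bool" where
  "agree_below n f g \<longleftrightarrow> (\<forall>i<n. f $ i = g $ i)"

lemma agree_below_iff_dvd:
  "agree_below n f g \<longleftrightarrow> fps_X ^ n dvd (f - g :: 'a::comm_ring_1 fps)"
proof
  assume "agree_below n f g"
  then have "f - g = fps_X ^ n * fps_shift n (f - g)"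
    by (intro fps_ext) (simp add: agree_below_def fps_X_power_mult_nth)
  then show "fps_X ^ n dvd (f - g)" by (metis dvdI)
next
  assume "fps_X ^ n dvd (f - g)"
  then obtain d where "f - g = fps_X ^ n * d" by (elim dvdE)
  then have "(f - g) $ i = 0" if "i < n" for i
    using that by (simp add: fps_X_power_mult_nth)
  then show "agree_below n f g" by (simp add: agree_below_def)
qed

lemma agree_below_refl [simp]: "agree_below n f f"
  by (simp add: agree_below_def)

lemma agree_below_sym: "agree_below n f g \<Longrightarrow> agree_below n g f"
  by (simp add: agree_below_def)

lemma agree_below_trans [trans]:
  "agree_below n f g \<Longrightarrow> agree_below n g h \<Longrightarrow> agree_below n f h"
  by (simp add: agree_below_def)

lemma agree_below_mono: "m \<le> n \<Longrightarrow> agree_below n f g \<Longrightarrow> agree_below m f g"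
  by (simp add: agree_below_def)

lemma fps_eq_if_agree_below: "(\<And>n. agree_below n f g) \<Longrightarrow> f = g"
  by (intro fps_ext) (meson agree_below_def lessI)

lemma agree_below_add:
  "agree_below n f f' \<Longrightarrow> agree_below n g g' \<Longrightarrow> agree_below n (f + g) (f' + g')"
  by (simp add: agree_below_def)

lemma agree_below_diff:
  "agree_below n f f' \<Longrightarrow> agree_below n g g' \<Longrightarrow> agree_below n (f - g) (f' - g')"
  by (simp add: agree_below_def)

lemma agree_below_mult:
  fixes f f' g g' :: "'a::comm_ring_1 fps"
  assumes "agree_below n f f'" "agree_below n g g'"
  shows "agree_below n (f * g) (f' * g')"
proof -
  have "f * g - f' * g' = (f - f') * g + f' * (g - g')"
    by (simp add: algebra_simps)
  with assms show ?thesis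
    by (simp add: agree_below_iff_dvd)
qed

lemma agree_below_power:
  "agree_below n f (g :: 'a::comm_ring_1 fps) \<Longrightarrow> agree_below n (f ^ k) (g ^ k)"
  by (induction k) (simp_all add: agree_below_mult)

lemma agree_below_prod:
  "(\<And>k. k \<in> S \<Longrightarrow> agree_below n (f k) (g k :: 'a::comm_ring_1 fps)) \<Longrightarrow>
    agree_below n (prod f S) (prod g S)"
  by (induction S rule: infinite_finite_induct) (simp_all add: agree_below_mult)

lemma agree_below_sum:
  "(\<And>k. k \<in> S \<Longrightarrow> agree_below n (f k) (g k)) \<Longrightarrow> agree_below n (sum f S) (sum g S)"
  unfolding agree_below_def by (auto simp: fps_sum_nth intro: sum.cong)

lemma agree_below_inverse:
  fixes f g :: "'a::field fps"
  assumes "f $ 0 \<noteq> 0" "g $ 0 \<noteq> 0" "agree_below n f g"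
  shows "agree_below n (inverse f) (inverse g)"
proof -
  have "inverse f - inverse g = inverse f * inverse g * (g - f)"
    using assms(1,2) by (simp add: algebra_simps inverse_mult_eq_1 inverse_mult_eq_1'
        mult.assoc[symmetric])
  moreover have "fps_X ^ n dvd g - f"
    using agree_below_sym[OF assms(3)] by (simp add: agree_below_iff_dvd)
  ultimately show ?thesis
    by (simp add: agree_below_iff_dvd)
qed

lemma agree_below_X_power_mult:
  "n \<le> d \<Longrightarrow> agree_below n (fps_X ^ d * f) (fps_X ^ d * g)"
  by (simp add: agree_below_def fps_X_power_mult_nth)

lemma fps_minus_one_power_mult_nth [simp]:
  "((-1 :: 'a::comm_ring_1 fps) ^ k * f) $ i = (-1) ^ k * f $ i"
proof -
  have "(-1 :: 'a fps) ^ k = fps_const ((-1) ^ k)"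
    by (simp flip: fps_const_power fps_const_neg)
  then show ?thesis by simp
qed

lemma fps_compose_X_power_nth:
  assumes "m > 0"
  shows "(g oo fps_X ^ m) $ n = (if m dvd n then g $ (n div m) else (0::'a::comm_ring_1))"
proof -
  have "(g oo fps_X ^ m) $ n = (\<Sum>i=0..n. g $ i * (if n = m * i then 1 else 0))"
    by (simp add: fps_compose_nth power_mult[symmetric] mult.commute)
  also have "\<dots> = (\<Sum>i\<in>(if m dvd n then {n div m} else {}). g $ i)"
    using assms by (intro sum.mono_neutral_cong_right) (auto split: if_splits elim!: dvdE)
  finally show ?thesis by simp
qed

lemma agree_below_compose_X_power:
  "m > 0 \<Longrightarrow> agree_below n f g \<Longrightarrow>
    agree_below (m * n) (f oo fps_X ^ m) (g oo fps_X ^ m :: 'a::comm_ring_1 fps)"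
  unfolding agree_below_def by (auto simp: fps_compose_X_power_nth elim!: dvdE)

lemma fps_X_power_compose: "g $ 0 = 0 \<Longrightarrow> fps_X ^ n oo g = (g ^ n :: 'a::idom fps)"
  by (simp add: fps_compose_power[symmetric])

lemma fps_X_power_compose_X_power:
  "m > 0 \<Longrightarrow> (fps_X ^ k :: 'a::idom fps) oo fps_X ^ m = fps_X ^ (m * k)"
  by (simp add: fps_X_power_compose power_mult)

lemma fps_compose_X_power_X_power:
  "m > 0 \<Longrightarrow> k > 0 \<Longrightarrow>
    (f oo fps_X ^ m) oo fps_X ^ k = (f oo fps_X ^ (m * k) :: 'a::idom fps)"
  by (simp add: fps_compose_assoc[symmetric] fps_X_power_compose_X_power mult.commute)

lemmas fps_compose_ring_simps = fps_compose_add_distrib fps_compose_sub_distrib fps_compose_uminus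
  fps_compose_mult_distrib numeral_compose neg_numeral_compose fps_compose_1
  fps_X_fps_compose_startby0 fps_X_power_compose

section \<open>The q-binomial theorem\<close>

fun qbinomial :: "'a::comm_ring_1 \<Rightarrow> nat \<Rightarrow> nat \<Rightarrow> 'a" where
  "qbinomial p 0 0 = 1"
| "qbinomial p 0 (Suc k) = 0"
| "qbinomial p (Suc m) 0 = 1"
| "qbinomial p (Suc m) (Suc k) = p ^ Suc k * qbinomial p m (Suc k) + qbinomial p m k"

lemma qbinomial_eq_0: "m < k \<Longrightarrow> qbinomial p m k = 0"
  by (induction p m k rule: qbinomial.induct) auto

lemma qbinomial_0_right [simp]: "qbinomial p m 0 = 1"
  by (cases m) auto

lemma qbinomial_diag [simp]: "qbinomial p m m = 1"
  by (induction m) (simp_all add: qbinomial_eq_0)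

lemma Suc_choose_two: "Suc k choose 2 = k + (k choose 2)"
  by (simp add: numeral_2_eq_2)

lemma two_times_choose_two: "2 * (k choose 2) = k * (k - 1)"
  by (induction k) (auto simp: Suc_choose_two algebra_simps elim: not0_implies_Suc)

theorem q_binomial:
  fixes p x y :: "'a::comm_ring_1"
  shows "(\<Prod>i<m. y + x * p ^ i)
    = (\<Sum>k\<le>m. qbinomial p m k * p ^ (k choose 2) * x ^ k * y ^ (m - k))"
proof (induction m arbitrary: x)
  case 0
  then show ?case by (simp add: numeral_2_eq_2)
next
  case (Suc m)
  have "(\<Prod>i<Suc m. y + x * p ^ i) = (y + x) * (\<Prod>i<m. y + (x * p) * p ^ i)"
    by (subst prod.lessThan_Suc_shift) (simp add: mult.assoc)
  also have "\<dots> = (y + x)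
      * (\<Sum>k\<le>m. qbinomial p m k * p ^ (k choose 2) * (x * p) ^ k * y ^ (m - k))"
    by (simp only: Suc)
  also have "\<dots> = (\<Sum>k\<le>m. qbinomial p m k * p ^ k * p ^ (k choose 2) * x ^ k * y ^ (Suc m - k))
      + (\<Sum>k\<le>m. qbinomial p m k * p ^ (Suc k choose 2) * x ^ Suc k * y ^ (Suc m - Suc k))"
    by (simp add: distrib_right sum_distrib_left Suc_diff_le power_add power_mult_distrib
        Suc_choose_two algebra_simps sum.distrib)
  also have "(\<Sum>k\<le>m. qbinomial p m k * p ^ (Suc k choose 2) * x ^ Suc k * y ^ (Suc m - Suc k))
      = (\<Sum>k\<le>Suc m. (if k = 0 then 0 else qbinomial p m (k - 1))
          * p ^ (k choose 2) * x ^ k * y ^ (Suc m - k))"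
    by (subst sum.atMost_Suc_shift) simp
  also have "(\<Sum>k\<le>m. qbinomial p m k * p ^ k * p ^ (k choose 2) * x ^ k * y ^ (Suc m - k))
      = (\<Sum>k\<le>Suc m. qbinomial p m k * p ^ k * p ^ (k choose 2) * x ^ k * y ^ (Suc m - k))"
    by (simp add: qbinomial_eq_0)
  also have "(\<Sum>k\<le>Suc m. qbinomial p m k * p ^ k * p ^ (k choose 2) * x ^ k * y ^ (Suc m - k))
      + (\<Sum>k\<le>Suc m. (if k = 0 then 0 else qbinomial p m (k - 1))
          * p ^ (k choose 2) * x ^ k * y ^ (Suc m - k))
      = (\<Sum>k\<le>Suc m. qbinomial p (Suc m) k * p ^ (k choose 2) * x ^ k * y ^ (Suc m - k))"
    by (subst sum.distrib[symmetric], intro sum.cong) (auto simp: algebra_simps gr0_conv_Suc)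
  finally show ?case .
qed

definition qpochhammer :: "'a::comm_ring_1 \<Rightarrow> nat \<Rightarrow> 'a" where
  "qpochhammer p n = (\<Prod>i\<in>{1..n}. 1 - p ^ i)"

lemma qpochhammer_Suc: "qpochhammer p (Suc n) = qpochhammer p n * (1 - p ^ Suc n)"
  unfolding qpochhammer_def by (simp add: prod.nat_ivl_Suc')

lemma qpochhammer_split:
  assumes "i \<le> n"
  shows "qpochhammer p n = qpochhammer p i * (\<Prod>k\<in>{i<..n}. 1 - p ^ k)"
proof -
  have "{1..n} = {1..i} \<union> {i<..n}" using assms by auto
  then show ?thesis
    unfolding qpochhammer_def by (simp only:) (rule prod.union_disjoint; auto)
qed

lemma qbinomial_qpochhammer:
  "k \<le> m \<Longrightarrow> qbinomial p m k * qpochhammer p k * qpochhammer p (m - k) = qpochhammer p m"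
proof (induction m arbitrary: k)
  case 0
  then show ?case by (simp add: qpochhammer_def)
next
  case (Suc m)
  show ?case
  proof (cases k)
    case 0
    then show ?thesis by (simp add: qpochhammer_def)
  next
    case (Suc k')
    show ?thesis
    proof (cases "k' = m")
      case True
      then show ?thesis using Suc by (simp add: qpochhammer_def)
    next
      case False
      with Suc \<open>k \<le> Suc m\<close> have k': "Suc k' \<le> m" by simp
      then have m_minus_k': "m - k' = Suc (m - Suc k')" by simp
      note IH1 = Suc.IH[OF k']
      have IH2: "qbinomial p m k' * qpochhammer p k' * qpochhammer p (m - k') = qpochhammer p m"
        using Suc.IH k' by simp
      have "qbinomial p (Suc m) k * qpochhammer p k * qpochhammer p (Suc m - k)
          = p ^ Suc k'
              * (qbinomial p m (Suc k') * qpochhammer p (Suc k') * qpochhammer p (m - Suc k'))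
              * (1 - p ^ (m - k'))
            + (qbinomial p m k' * qpochhammer p k' * qpochhammer p (m - k')) * (1 - p ^ Suc k')"
        using Suc m_minus_k' by (simp add: qpochhammer_Suc algebra_simps)
      also have "\<dots> = qpochhammer p m * (p ^ Suc k' * (1 - p ^ (m - k')) + (1 - p ^ Suc k'))"
        by (simp only: IH1 IH2) (simp add: algebra_simps)
      also have "p ^ Suc k' * (1 - p ^ (m - k')) = p ^ Suc k' - p ^ Suc m"
        using k' by (simp add: algebra_simps power_add[symmetric])
      finally show ?thesis by (simp add: qpochhammer_Suc)
    qed
  qed
qed

section \<open>Euler products as limits of q-Pochhammer symbols\<close>

lemma qpochhammer_nth_0: "p $ 0 = 0 \<Longrightarrow> qpochhammer p n $ 0 = (1 :: 'a::comm_ring_1)"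
  by (induction n) (simp_all add: qpochhammer_Suc, simp add: qpochhammer_def)

lemma qpochhammer_compose:
  "h $ 0 = 0 \<Longrightarrow> qpochhammer g n oo h = qpochhammer (g oo h) n"
  for g h :: "'a::idom fps"
  unfolding qpochhammer_def
  by (simp add: fps_compose_prod_distrib fps_compose_sub_distrib fps_compose_power)

lemma agree_below_qpochhammer:
  assumes "m > 0" "i \<le> n"
  shows "agree_below (m * Suc i)
    (qpochhammer (fps_X ^ m) n) (qpochhammer (fps_X ^ m) i :: 'a::comm_ring_1 fps)"
proof -
  have "agree_below (m * Suc i) (\<Prod>k\<in>{i<..n}. 1 - (fps_X ^ m) ^ k :: 'a fps) (\<Prod>k\<in>{i<..n}. 1)"
  proof (rule agree_below_prod)
    fix k assume "k \<in> {i<..n}"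
    then have "m * Suc i \<le> m * k" by (intro mult_le_mono2) simp
    then show "agree_below (m * Suc i) (1 - (fps_X ^ m) ^ k :: 'a fps) 1"
      by (auto simp: agree_below_def power_mult[symmetric])
  qed
  then have "agree_below (m * Suc i)
      (qpochhammer (fps_X ^ m) i * (\<Prod>k\<in>{i<..n}. 1 - (fps_X ^ m) ^ k))
      (qpochhammer (fps_X ^ m) i * 1 :: 'a fps)"
    by (intro agree_below_mult) simp_all
  then show ?thesis
    by (simp only: qpochhammer_split[OF assms(2), symmetric] mult_1_right)
qed

lemma agree_below_eulerE: "agree_below (Suc n) eulerE (qpochhammer fps_X n)"
  unfolding agree_below_def
proof (intro allI impI)
  fix i assume "i < Suc n"
  then have "agree_below (Suc i) (qpochhammer fps_X n) (qpochhammer fps_X i :: rat fps)"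
    using agree_below_qpochhammer[of 1 i n] by simp
  then have "qpochhammer fps_X n $ i = (qpochhammer fps_X i :: rat fps) $ i"
    by (simp add: agree_below_def)
  then show "eulerE $ i = qpochhammer fps_X n $ i"
    by (simp add: eulerE_def qpochhammer_def)
qed

lemma agree_below_eulerE_at:
  assumes "m > 0" "n \<le> m * Suc N"
  shows "agree_below n (eulerE_at m) (qpochhammer (fps_X ^ m) N)"
proof -
  have "agree_below (m * Suc N) (eulerE oo fps_X ^ m) (qpochhammer fps_X N oo fps_X ^ m)"
    using agree_below_compose_X_power[OF assms(1) agree_below_eulerE] .
  then have "agree_below (m * Suc N) (eulerE_at m) (qpochhammer (fps_X ^ m) N)"
    using assms(1) by (simp add: eulerE_at_def qpochhammer_compose)
  then show ?thesis
    using agree_below_mono[OF assms(2)] by blast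
qed

lemma eulerE_nth_0 [simp]: "eulerE $ 0 = 1"
  by (simp add: eulerE_def)

lemma eulerE_at_nth_0 [simp]: "eulerE_at m $ 0 = 1"
  by (simp add: eulerE_at_def)

lemma eulerE_at_1: "eulerE_at 1 = eulerE"
  by (simp add: eulerE_at_def)

lemma eulerE_at_compose:
  "m > 0 \<Longrightarrow> k > 0 \<Longrightarrow> eulerE_at m oo fps_X ^ k = eulerE_at (m * k)"
  unfolding eulerE_at_def by (rule fps_compose_X_power_X_power)

section \<open>Gauss's identity\<close>

definition odd_qpochhammer :: "nat \<Rightarrow> 'a::comm_ring_1 fps" where
  "odd_qpochhammer n = (\<Prod>j<n. 1 - fps_X ^ (2 * j + 1))"

lemma odd_qpochhammer_mult_qpochhammer:
  "odd_qpochhammer n * qpochhammer (fps_X ^ 2) n = (qpochhammer fps_X (2 * n) :: 'a::comm_ring_1 fps)"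
proof (induction n)
  case 0
  then show ?case by (simp add: odd_qpochhammer_def qpochhammer_def)
next
  case (Suc n)
  have odd: "odd_qpochhammer (Suc n) = odd_qpochhammer n * (1 - fps_X ^ (2 * n + 1) :: 'a fps)"
    by (simp add: odd_qpochhammer_def)
  have even: "qpochhammer (fps_X ^ 2) (Suc n)
      = qpochhammer (fps_X ^ 2) n * (1 - fps_X ^ (2 * Suc n) :: 'a fps)"
    by (simp only: qpochhammer_Suc power_mult)
  have "odd_qpochhammer (Suc n) * qpochhammer (fps_X ^ 2) (Suc n)
      = (odd_qpochhammer n * qpochhammer (fps_X ^ 2) n)
          * ((1 - fps_X ^ (2 * n + 1)) * (1 - fps_X ^ (2 * Suc n)) :: 'a fps)"
    by (simp only: odd even mult_ac)
  also have "\<dots> = qpochhammer fps_X (2 * Suc n)"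
    by (simp add: Suc.IH qpochhammer_Suc)
  finally show ?case .
qed

lemma prod_fps_X_even_powers:
  "(\<Prod>i<n. fps_X ^ (2 * i)) = (fps_X ^ (2 * (n choose 2)) :: 'a::comm_ring_1 fps)"
  by (induction n) (simp_all add: Suc_choose_two power_add[symmetric] algebra_simps numeral_2_eq_2)

lemma gauss_product_lower:
  "(\<Prod>i<n. fps_X ^ (2 * n - 1) + -1 * (fps_X ^ 2) ^ i)
     = (-1) ^ n * fps_X ^ (2 * (n choose 2)) * (odd_qpochhammer n :: 'a::comm_ring_1 fps)"
proof -
  have "(\<Prod>i<n. fps_X ^ (2 * n - 1) + -1 * (fps_X ^ 2) ^ i)
      = (\<Prod>i<n. -1 * fps_X ^ (2 * i) * (1 - fps_X ^ (2 * (n - Suc i) + 1)) :: 'a fps)"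
  proof (intro prod.cong refl)
    fix i assume "i \<in> {..<n}"
    then have "2 * n - 1 = 2 * i + (2 * (n - Suc i) + 1)" by auto
    then have "fps_X ^ (2 * n - 1) = fps_X ^ (2 * i) * (fps_X ^ (2 * (n - Suc i) + 1) :: 'a fps)"
      by (metis power_add)
    moreover have "(fps_X ^ 2) ^ i = (fps_X ^ (2 * i) :: 'a fps)"
      by (simp only: power_mult)
    ultimately show "fps_X ^ (2 * n - 1) + -1 * (fps_X ^ 2) ^ i
        = -1 * fps_X ^ (2 * i) * (1 - fps_X ^ (2 * (n - Suc i) + 1) :: 'a fps)"
      by (simp only:) (simp add: algebra_simps)
  qed
  also have "\<dots> = (\<Prod>i<n. -1) * (\<Prod>i<n. fps_X ^ (2 * i))
      * (\<Prod>i<n. 1 - fps_X ^ (2 * (n - Suc i) + 1))"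
    by (simp only: prod.distrib)
  also have "(\<Prod>i<n. 1 - fps_X ^ (2 * (n - Suc i) + 1)) = (odd_qpochhammer n :: 'a fps)"
    unfolding odd_qpochhammer_def by (rule prod.nat_diff_reindex)
  finally show ?thesis by (simp add: prod_fps_X_even_powers)
qed

lemma gauss_product_upper:
  assumes "n \<ge> 1"
  shows "(\<Prod>i\<in>{n..<2*n}. fps_X ^ (2 * n - 1) + -1 * (fps_X ^ 2) ^ i)
     = fps_X ^ ((2 * n - 1) * n) * (odd_qpochhammer n :: 'a::comm_ring_1 fps)"
proof -
  have "{n..<2*n} = {0+n..<n+n}" by (simp add: mult_2)
  then have "(\<Prod>i\<in>{n..<2*n}. fps_X ^ (2 * n - 1) + -1 * (fps_X ^ 2) ^ i)
      = (\<Prod>j\<in>{0..<n}. fps_X ^ (2 * n - 1) + -1 * (fps_X ^ 2) ^ (j + n) :: 'a fps)"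
    by (simp only: prod.shift_bounds_nat_ivl)
  also have "\<dots> = (\<Prod>j\<in>{0..<n}. fps_X ^ (2 * n - 1) * (1 - fps_X ^ (2 * j + 1)))"
  proof (intro prod.cong refl)
    fix j assume "j \<in> {0..<n}"
    have "2 * (j + n) = (2 * n - 1) + (2 * j + 1)" using assms by auto
    then have "fps_X ^ (2 * (j + n)) = fps_X ^ (2 * n - 1) * (fps_X ^ (2 * j + 1) :: 'a fps)"
      by (metis power_add)
    moreover have "(fps_X ^ 2) ^ (j + n) = (fps_X ^ (2 * (j + n)) :: 'a fps)"
      by (simp only: power_mult)
    ultimately show "fps_X ^ (2 * n - 1) + -1 * (fps_X ^ 2) ^ (j + n)
        = fps_X ^ (2 * n - 1) * (1 - fps_X ^ (2 * j + 1) :: 'a fps)"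
      by (simp only:) (simp add: algebra_simps)
  qed
  also have "\<dots> = fps_X ^ ((2 * n - 1) * n) * odd_qpochhammer n"
    by (simp add: prod.distrib odd_qpochhammer_def atLeast0LessThan power_mult)
  finally show ?thesis .
qed

text \<open>
  The finite form of Gauss's identity compares two evaluations of
  prod_{i<2n} (q^(2n-1) - q^(2i)): splitting the product at i = n, and expanding it by the
  q-binomial theorem with base q^2.
\<close>

lemma gauss_product_split:
  assumes "n \<ge> 1"
  shows "(\<Prod>i<2*n. fps_X ^ (2 * n - 1) + -1 * (fps_X ^ 2) ^ i)
    = fps_X ^ (2 * (n choose 2) + (2 * n - 1) * n)
      * ((-1) ^ n * (odd_qpochhammer n :: 'a::comm_ring_1 fps) ^ 2)"
proof -
  have "(\<Prod>i<2*n. fps_X ^ (2 * n - 1) + -1 * (fps_X ^ 2) ^ i)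
      = (\<Prod>i<n. fps_X ^ (2 * n - 1) + -1 * (fps_X ^ 2) ^ i)
        * (\<Prod>i\<in>{n..<2*n}. fps_X ^ (2 * n - 1) + -1 * (fps_X ^ 2) ^ i :: 'a fps)"
    by (simp add: lessThan_atLeast0 prod.atLeastLessThan_concat)
  then show ?thesis
    by (simp only: gauss_product_lower gauss_product_upper[OF assms] power_add)
      (simp add: algebra_simps power2_eq_square)
qed

lemma int_two_times_choose_two: "int (2 * (k choose 2)) = int k * (int k - 1)"
  unfolding two_times_choose_two by (cases k) (simp_all add: algebra_simps)

lemma gauss_exponent:
  assumes "k \<le> 2 * n" "n \<ge> 1"
  shows "2 * (k choose 2) + (2 * n - 1) * (2 * n - k)
    = (2 * (n choose 2) + (2 * n - 1) * n) + nat ((int k - int n) ^ 2)"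
proof -
  have "int (2 * (k choose 2) + (2 * n - 1) * (2 * n - k))
      = int (2 * (k choose 2)) + (2 * int n - 1) * (2 * int n - int k)"
    using assms by (simp add: of_nat_diff)
  also have "\<dots> = int (2 * (n choose 2)) + (2 * int n - 1) * int n + (int k - int n) ^ 2"
    by (simp only: int_two_times_choose_two) (simp add: algebra_simps power2_eq_square)
  also have "\<dots> = int ((2 * (n choose 2) + (2 * n - 1) * n) + nat ((int k - int n) ^ 2))"
    using assms by (simp add: of_nat_diff)
  finally show ?thesis by (simp only: of_nat_eq_iff)
qed

lemma minus_one_power_eq:
  "(-1 :: 'a::ring_1) ^ k = (-1) ^ n * (-1) ^ nat \<bar>int k - int n\<bar>"
proof -
  have "nat \<bar>int k - int n\<bar> = (if k \<le> n then n - k else k - n)" by auto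
  then show ?thesis by (auto simp: minus_one_power_iff even_diff_nat)
qed

lemma gauss_product_expand:
  assumes "n \<ge> 1"
  shows "(\<Prod>i<2*n. fps_X ^ (2 * n - 1) + -1 * (fps_X ^ 2) ^ i)
    = fps_X ^ (2 * (n choose 2) + (2 * n - 1) * n) * ((-1) ^ n * (\<Sum>k\<le>2*n.
        (-1) ^ nat \<bar>int k - int n\<bar> * fps_X ^ nat ((int k - int n) ^ 2)
          * qbinomial (fps_X ^ 2) (2 * n) k :: 'a::comm_ring_1 fps))"
proof -
  define e where "e = 2 * (n choose 2) + (2 * n - 1) * n"
  have "(\<Prod>i<2*n. fps_X ^ (2 * n - 1) + -1 * (fps_X ^ 2) ^ i)
      = (\<Sum>k\<le>2*n. qbinomial (fps_X ^ 2) (2*n) k * (fps_X ^ 2) ^ (k choose 2) * (-1) ^ k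
          * (fps_X ^ (2 * n - 1)) ^ (2 * n - k) :: 'a fps)"
    by (rule q_binomial)
  also have "\<dots> = (\<Sum>k\<le>2*n. fps_X ^ e * ((-1) ^ n * ((-1) ^ nat \<bar>int k - int n\<bar>
      * fps_X ^ nat ((int k - int n) ^ 2) * qbinomial (fps_X ^ 2) (2 * n) k)))"
  proof (intro sum.cong refl)
    fix k assume "k \<in> {..2*n}"
    then have exponent: "(fps_X ^ 2) ^ (k choose 2) * (fps_X ^ (2 * n - 1)) ^ (2 * n - k)
        = (fps_X ^ e * fps_X ^ nat ((int k - int n) ^ 2) :: 'a fps)"
      using gauss_exponent[OF _ assms, of k]
      by (simp add: e_def power_mult[symmetric] power_add[symmetric])
    have "qbinomial (fps_X ^ 2) (2*n) k * (fps_X ^ 2) ^ (k choose 2) * (-1) ^ k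
        * (fps_X ^ (2 * n - 1)) ^ (2 * n - k)
      = (-1) ^ k * ((fps_X ^ 2) ^ (k choose 2) * (fps_X ^ (2 * n - 1)) ^ (2 * n - k))
          * (qbinomial (fps_X ^ 2) (2 * n) k :: 'a fps)"
      by (simp only: mult_ac)
    also have "\<dots> = (-1) ^ k * (fps_X ^ e * fps_X ^ nat ((int k - int n) ^ 2))
        * qbinomial (fps_X ^ 2) (2 * n) k"
      by (simp only: exponent)
    also have "\<dots> = fps_X ^ e * ((-1) ^ n * ((-1) ^ nat \<bar>int k - int n\<bar>
          * fps_X ^ nat ((int k - int n) ^ 2) * qbinomial (fps_X ^ 2) (2 * n) k))"
      by (subst minus_one_power_eq[of k n]) (simp only: mult_ac)
    finally show "qbinomial (fps_X ^ 2) (2*n) k * (fps_X ^ 2) ^ (k choose 2) * (-1) ^ k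
        * (fps_X ^ (2 * n - 1)) ^ (2 * n - k)
      = (fps_X ^ e * ((-1) ^ n * ((-1) ^ nat \<bar>int k - int n\<bar>
          * fps_X ^ nat ((int k - int n) ^ 2) * qbinomial (fps_X ^ 2) (2 * n) k)) :: 'a fps)" .
  qed
  finally show ?thesis
    by (simp only: e_def sum_distrib_left)
qed

theorem gauss_identity_finite:
  "odd_qpochhammer n ^ 2 = (\<Sum>j\<in>{-int n..int n}.
     (-1) ^ nat \<bar>j\<bar> * fps_X ^ nat (j ^ 2) * qbinomial (fps_X ^ 2) (2 * n) (nat (int n + j))
       :: 'a::idom fps)"
proof (cases "n = 0")
  case True
  then show ?thesis by (simp add: odd_qpochhammer_def)
next
  case False
  then have n: "n \<ge> 1" by simp
  have "fps_X ^ (2 * (n choose 2) + (2 * n - 1) * n) * ((-1) ^ n * odd_qpochhammer n ^ 2)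
      = fps_X ^ (2 * (n choose 2) + (2 * n - 1) * n) * ((-1) ^ n * (\<Sum>k\<le>2*n.
          (-1) ^ nat \<bar>int k - int n\<bar> * fps_X ^ nat ((int k - int n) ^ 2)
            * qbinomial (fps_X ^ 2) (2 * n) k :: 'a fps))"
    using gauss_product_split[OF n, symmetric] gauss_product_expand[OF n] by (rule trans)
  then have "odd_qpochhammer n ^ 2 = (\<Sum>k\<le>2*n. (-1) ^ nat \<bar>int k - int n\<bar>
      * fps_X ^ nat ((int k - int n) ^ 2) * qbinomial (fps_X ^ 2) (2 * n) k :: 'a fps)"
    by simp
  also have "\<dots> = (\<Sum>j\<in>{-int n..int n}. (-1) ^ nat \<bar>j\<bar> * fps_X ^ nat (j ^ 2)
      * qbinomial (fps_X ^ 2) (2 * n) (nat (int n + j)))"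
    by (rule sum.reindex_bij_witness[where i = "\<lambda>j. nat (j + int n)"
          and j = "\<lambda>k. int k - int n"]) auto
  finally show ?thesis .
qed

definition theta :: "rat fps" where
  "theta = Abs_fps (\<lambda>i. \<Sum>j\<in>{-int i..int i}. if j ^ 2 = int i then (-1) ^ nat \<bar>j\<bar> else 0)"

lemma int_abs_le_square: "\<bar>j :: int\<bar> \<le> j ^ 2"
proof (cases "j = 0")
  case False
  then have "\<bar>j\<bar> \<le> \<bar>j\<bar> ^ 2" by (intro self_le_power) auto
  then show ?thesis by simp
qed simp

lemma theta_nth:
  assumes "i \<le> M"
  shows "theta $ i = (\<Sum>j\<in>{-int M..int M}. if j ^ 2 = int i then (-1) ^ nat \<bar>j\<bar> else 0)"
  unfolding theta_def fps_nth_Abs_fps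
proof (rule sum.mono_neutral_left)
  show "\<forall>j\<in>{-int M..int M} - {-int i..int i}.
      (if j ^ 2 = int i then (-1) ^ nat \<bar>j\<bar> else (0::rat)) = 0"
  proof
    fix j assume "j \<in> {-int M..int M} - {-int i..int i}"
    then have "\<bar>j\<bar> > int i" by auto
    then have "j ^ 2 \<noteq> int i" using int_abs_le_square[of j] by linarith
    then show "(if j ^ 2 = int i then (-1) ^ nat \<bar>j\<bar> else (0::rat)) = 0" by simp
  qed
qed (use assms in auto)

lemma theta_nth_0 [simp]: "theta $ 0 = 1"
  by (simp add: theta_def)

lemma agree_below_theta:
  "agree_below (Suc n) theta (\<Sum>j\<in>{-int n..int n}. (-1) ^ nat \<bar>j\<bar> * fps_X ^ nat (j ^ 2))"
  unfolding agree_below_def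
proof (intro allI impI)
  fix i assume "i < Suc n"
  have "(\<Sum>j\<in>{-int n..int n}. (-1) ^ nat \<bar>j\<bar> * fps_X ^ nat (j ^ 2) :: rat fps) $ i
      = (\<Sum>j\<in>{-int n..int n}. if j ^ 2 = int i then (-1) ^ nat \<bar>j\<bar> else 0)"
    unfolding fps_sum_nth by (intro sum.cong refl) (auto simp: fps_X_power_iff nat_eq_iff)
  also have "\<dots> = theta $ i"
    using \<open>i < Suc n\<close> by (intro theta_nth[symmetric]) simp
  finally show "theta $ i = (\<Sum>j\<in>{-int n..int n}. (-1) ^ nat \<bar>j\<bar> * fps_X ^ nat (j ^ 2)) $ i" ..
qed

lemma qbinomial_eq_qpochhammer_quotient:
  fixes p :: "'a::field fps"
  assumes "p $ 0 = 0" "k \<le> m"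
  shows "qbinomial p m k
    = qpochhammer p m * inverse (qpochhammer p k) * inverse (qpochhammer p (m - k))"
proof -
  have unit: "qpochhammer p j * inverse (qpochhammer p j) = 1" for j
    using assms(1) by (simp add: inverse_mult_eq_1' qpochhammer_nth_0)
  have "qbinomial p m k = qbinomial p m k * (qpochhammer p k * inverse (qpochhammer p k))
      * (qpochhammer p (m - k) * inverse (qpochhammer p (m - k)))"
    by (simp only: unit mult_1_right)
  also have "\<dots> = (qbinomial p m k * qpochhammer p k * qpochhammer p (m - k))
      * inverse (qpochhammer p k) * inverse (qpochhammer p (m - k))"
    by (simp only: mult_ac)
  finally show ?thesis
    by (simp only: qbinomial_qpochhammer[OF assms(2)])
qed

lemma agree_below_qbinomial:
  assumes "k \<le> m" "M \<le> 2 * Suc k" "M \<le> 2 * Suc (m - k)"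
  shows "agree_below M (qbinomial (fps_X ^ 2) m k) (inverse (eulerE_at 2))"
proof -
  let ?qp = "qpochhammer (fps_X ^ 2 :: rat fps)"
  have "agree_below M (?qp j) (eulerE_at 2)" if "M \<le> 2 * Suc j" for j
    using agree_below_eulerE_at[of 2 M j] that by (simp add: agree_below_sym)
  then have "agree_below M (?qp m * inverse (?qp k) * inverse (?qp (m - k)))
      (eulerE_at 2 * inverse (eulerE_at 2) * inverse (eulerE_at 2))"
    using assms by (intro agree_below_mult agree_below_inverse) (simp_all add: qpochhammer_nth_0)
  then show ?thesis
    using assms(1) by (simp add: qbinomial_eq_qpochhammer_quotient inverse_mult_eq_1')
qed

lemma agree_below_odd_qpochhammer_square:
  assumes "2 * M \<le> n"
  shows "agree_below M (odd_qpochhammer n ^ 2) (theta * inverse (eulerE_at 2))"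
proof -
  let ?E2 = "eulerE_at 2"
  let ?term = "\<lambda>j::int. (-1) ^ nat \<bar>j\<bar> * fps_X ^ nat (j ^ 2) :: rat fps"
  have "agree_below M (?term j * qbinomial (fps_X ^ 2) (2 * n) (nat (int n + j)))
      (?term j * inverse ?E2)" if j: "j \<in> {-int n..int n}" for j
  proof (cases "M \<le> nat (j ^ 2)")
    case True
    then show ?thesis
      using agree_below_mult[OF agree_below_refl agree_below_X_power_mult[OF True]]
      by (simp add: mult.assoc)
  next
    case False
    then have "\<bar>j\<bar> < int M" using int_abs_le_square[of j] by linarith
    with j assms have "agree_below M (qbinomial (fps_X ^ 2) (2 * n) (nat (int n + j))) (inverse ?E2)"
      by (intro agree_below_qbinomial) auto
    then show ?thesis by (intro agree_below_mult) simp_all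
  qed
  then have "agree_below M (odd_qpochhammer n ^ 2) (\<Sum>j\<in>{-int n..int n}. ?term j * inverse ?E2)"
    unfolding gauss_identity_finite by (rule agree_below_sum)
  also have "(\<Sum>j\<in>{-int n..int n}. ?term j * inverse ?E2)
      = (\<Sum>j\<in>{-int n..int n}. ?term j) * inverse ?E2"
    by (simp only: sum_distrib_right)
  also have "agree_below M \<dots> (theta * inverse ?E2)"
    by (rule agree_below_mult[OF _ agree_below_refl], rule agree_below_sym,
        rule agree_below_mono[OF _ agree_below_theta]) (use assms in simp)
  finally show ?thesis .
qed

theorem gauss_identity: "theta * eulerE_at 2 = eulerE ^ 2"
proof (rule fps_eq_if_agree_below)
  fix M :: nat
  let ?E2 = "eulerE_at 2" and ?n = "2 * M"
  have "agree_below M (qpochhammer (fps_X ^ 2) ?n) ?E2"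
    by (rule agree_below_sym, rule agree_below_eulerE_at) simp_all
  with agree_below_odd_qpochhammer_square[of M ?n]
  have "agree_below M (odd_qpochhammer ?n ^ 2 * qpochhammer (fps_X ^ 2) ?n ^ 2)
      (theta * inverse ?E2 * ?E2 ^ 2)"
    by (intro agree_below_mult agree_below_power) simp_all
  also have "theta * inverse ?E2 * ?E2 ^ 2 = theta * ?E2"
    by (simp add: power2_eq_square mult.assoc inverse_mult_eq_1)
  finally have partial: "agree_below M (qpochhammer fps_X (2 * ?n) ^ 2) (theta * ?E2)"
    by (simp only: odd_qpochhammer_mult_qpochhammer power_mult_distrib[symmetric])
  have "agree_below M (eulerE ^ 2) (qpochhammer fps_X (2 * ?n) ^ 2)"
    by (rule agree_below_power, rule agree_below_mono[OF _ agree_below_eulerE]) simp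
  then show "agree_below M (theta * ?E2) (eulerE ^ 2)"
    using partial by (rule agree_below_sym[OF agree_below_trans])
qed

section \<open>Trisection and the cubic norm\<close>

definition trisect :: "nat \<Rightarrow> 'a fps \<Rightarrow> 'a fps" where
  "trisect r f = Abs_fps (\<lambda>n. f $ (3 * n + r))"

lemma opU_eq_trisect_0: "opU = trisect 0"
  by (simp add: fun_eq_iff opU_def trisect_def)

definition join_trisection :: "'a::comm_ring_1 fps \<Rightarrow> 'a fps \<Rightarrow> 'a fps \<Rightarrow> 'a fps" where
  "join_trisection a b c
    = (a oo fps_X ^ 3) + fps_X * (b oo fps_X ^ 3) + fps_X ^ 2 * (c oo fps_X ^ 3)"

lemma fps_X_power_mult_compose_nth:
  assumes "r < 3" "s < 3"
  shows "(fps_X ^ s * (g oo fps_X ^ 3)) $ (3 * n + r)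
    = (if r = s then g $ n else (0 :: 'a::comm_ring_1))"
proof -
  have "\<not> 3 dvd (3 * n + r - s)" if "r \<noteq> s" "s \<le> 3 * n + r"
    using assms that by presburger
  then show ?thesis
    by (auto simp: fps_X_power_mult_nth fps_compose_X_power_nth)
qed

lemma join_trisection_nth:
  assumes "r < 3"
  shows "join_trisection a b c $ (3 * n + r)
    = (if r = 0 then a $ n else if r = 1 then b $ n else c $ n)"
proof -
  have "join_trisection a b c = fps_X ^ 0 * (a oo fps_X ^ 3) + fps_X ^ 1 * (b oo fps_X ^ 3)
      + fps_X ^ 2 * (c oo fps_X ^ 3)"
    by (simp add: join_trisection_def)
  then show ?thesis
    using assms by (simp only: fps_add_nth fps_X_power_mult_compose_nth) simp
qed

lemma trisect_join_trisection:
  "trisect 0 (join_trisection a b c) = a"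
  "trisect 1 (join_trisection a b c) = b"
  "trisect 2 (join_trisection a b c) = c"
  using join_trisection_nth[of 0 a b c] join_trisection_nth[of 1 a b c]
    join_trisection_nth[of 2 a b c]
  by (simp_all add: trisect_def fps_eq_iff del: One_nat_def)

lemma join_trisection_trisect: "join_trisection (trisect 0 f) (trisect 1 f) (trisect 2 f) = f"
proof (rule fps_ext)
  fix m :: nat
  define n r where "n = m div 3" and "r = m mod 3"
  then have m: "m = 3 * n + r" and r: "r < 3" by simp_all
  have "join_trisection (trisect 0 f) (trisect 1 f) (trisect 2 f) $ (3 * n + r)
      = (if r = 0 then trisect 0 f $ n else if r = 1 then trisect 1 f $ n else trisect 2 f $ n)"
    by (rule join_trisection_nth[OF r])
  also have "\<dots> = f $ (3 * n + r)"
    using r by (auto simp: trisect_def numeral_3_eq_3 less_Suc_eq)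
  finally show "join_trisection (trisect 0 f) (trisect 1 f) (trisect 2 f) $ m = f $ m"
    by (simp only: m)
qed

lemma join_trisection_mult:
  fixes a b c d e f :: "'a::idom fps"
  shows "join_trisection a b c * join_trisection d e f
    = join_trisection (a * d + fps_X * (b * f + c * e)) (a * e + b * d + fps_X * (c * f))
        (a * f + b * e + c * d)"
proof -
  have "(A + x * B + x ^ 2 * C) * (D + x * E + x ^ 2 * F)
    = (A * D + x ^ 3 * (B * F + C * E)) + x * (A * E + B * D + x ^ 3 * (C * F))
      + x ^ 2 * (A * F + B * E + C * D)"
    for A B C D E F x :: "'a fps"
    by (simp add: algebra_simps power3_eq_cube power2_eq_square)
  then show ?thesis
    by (simp add: join_trisection_def fps_compose_add_distrib fps_compose_mult_distrib)
qed

lemma trisect_0_mult_compose: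
  "trisect 0 ((g oo fps_X ^ 3) * h) = g * trisect 0 (h :: 'a::idom fps)"
proof -
  obtain a b c where h: "h = join_trisection a b c"
    by (metis join_trisection_trisect)
  have "(g oo fps_X ^ 3) * h = join_trisection (g * a) (g * b) (g * c)"
    by (simp add: h join_trisection_def fps_compose_mult_distrib algebra_simps)
  then show ?thesis
    by (simp add: h trisect_join_trisection)
qed

lemma compose_X_power_3_compose:
  fixes a c :: "'a::idom fps"
  shows "(a oo fps_X ^ 3) oo (fps_X * (c oo fps_X ^ 3)) = (a oo (fps_X * c ^ 3)) oo fps_X ^ 3"
proof -
  have "(a oo fps_X ^ 3) oo (fps_X * (c oo fps_X ^ 3))
      = a oo (fps_X ^ 3 oo (fps_X * (c oo fps_X ^ 3)))"
    by (rule fps_compose_assoc[symmetric]) simp_all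
  also have "fps_X ^ 3 oo (fps_X * (c oo fps_X ^ 3)) = (fps_X * c ^ 3) oo fps_X ^ 3"
    by (simp add: fps_X_power_compose fps_compose_mult_distrib fps_compose_power power_mult_distrib)
  also have "a oo \<dots> = (a oo (fps_X * c ^ 3)) oo fps_X ^ 3"
    by (rule fps_compose_assoc) simp_all
  finally show ?thesis .
qed

lemma trisect_0_compose:
  "trisect 0 (f oo (fps_X * (c oo fps_X ^ 3))) = trisect 0 f oo (fps_X * c ^ 3 :: 'a::idom fps)"
proof -
  obtain a b d where f: "f = join_trisection a b d"
    by (metis join_trisection_trisect)
  let ?T = "fps_X * (c oo fps_X ^ 3)" and ?w = "fps_X * c ^ 3"
  have "f oo ?T = join_trisection (a oo ?w) (c * (b oo ?w)) (c ^ 2 * (d oo ?w))"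
    by (simp add: f join_trisection_def fps_compose_add_distrib fps_compose_mult_distrib
        fps_compose_power fps_X_power_compose compose_X_power_3_compose algebra_simps
        power_mult_distrib)
  then show ?thesis
    by (simp add: f trisect_join_trisection)
qed

text \<open>
  For f = a(q^3) + q b(q^3) + q^2 c(q^3) this is the norm of a + b t + c t^2 from the cubic
  extension t^3 = q, which explains its multiplicativity.
\<close>

definition trinorm :: "'a::comm_ring_1 fps \<Rightarrow> 'a fps" where
  "trinorm f = trisect 0 f ^ 3 + fps_X * trisect 1 f ^ 3 + fps_X ^ 2 * trisect 2 f ^ 3
     - 3 * fps_X * trisect 0 f * trisect 1 f * trisect 2 f"

lemma trinorm_join_trisection:
  "trinorm (join_trisection a b c)
    = a ^ 3 + fps_X * b ^ 3 + fps_X ^ 2 * c ^ 3 - 3 * fps_X * a * b * c"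
  by (simp only: trinorm_def trisect_join_trisection)

lemma cubic_norm_mult:
  fixes a b c d e f x :: "'a::comm_ring_1"
  shows "(a ^ 3 + x * b ^ 3 + x ^ 2 * c ^ 3 - 3 * x * a * b * c)
      * (d ^ 3 + x * e ^ 3 + x ^ 2 * f ^ 3 - 3 * x * d * e * f)
    = (a * d + x * (b * f + c * e)) ^ 3 + x * (a * e + b * d + x * (c * f)) ^ 3
      + x ^ 2 * (a * f + b * e + c * d) ^ 3
      - 3 * x * (a * d + x * (b * f + c * e)) * (a * e + b * d + x * (c * f))
          * (a * f + b * e + c * d)"
  by (simp add: algebra_simps power3_eq_cube power2_eq_square)

lemma trinorm_mult: "trinorm (f * g) = trinorm f * trinorm (g :: 'a::idom fps)"
proof -
  obtain a b c d e h where "f = join_trisection a b c" and "g = join_trisection d e h"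
    by (metis join_trisection_trisect)
  then show ?thesis
    by (simp only: join_trisection_mult trinorm_join_trisection cubic_norm_mult)
qed

lemma trinorm_1 [simp]: "trinorm 1 = (1 :: 'a::idom fps)"
proof -
  have "trinorm (1 :: 'a fps) = trinorm (join_trisection 1 0 0)"
    by (simp add: join_trisection_def)
  then show ?thesis
    by (simp add: trinorm_join_trisection)
qed

lemma trinorm_power: "trinorm (f ^ k) = trinorm (f :: 'a::idom fps) ^ k"
  by (induction k) (simp_all add: trinorm_mult)

lemma agree_below_trisect:
  "r < 3 \<Longrightarrow> agree_below (3 * n) f g \<Longrightarrow> agree_below n (trisect r f) (trisect r g)"
  unfolding agree_below_def trisect_def by auto

lemma agree_below_trinorm:
  "agree_below (3 * n) f g \<Longrightarrow> agree_below n (trinorm f) (trinorm (g :: 'a::comm_ring_1 fps))"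
  unfolding trinorm_def
  by (intro agree_below_add agree_below_diff agree_below_mult agree_below_power agree_below_trisect
      agree_below_refl) simp_all

lemma trinorm_one_minus_X_power:
  "trinorm (1 - fps_X ^ j :: 'a::idom fps)
    = (if 3 dvd j then (1 - fps_X ^ (j div 3)) ^ 3 else 1 - fps_X ^ j)"
proof -
  define m where "m = j div 3"
  have j: "j = 3 * m + j mod 3" by (simp add: m_def)
  consider "j mod 3 = 0" | "j mod 3 = 1" | "j mod 3 = 2" by linarith
  then show ?thesis
  proof cases
    case 1
    then have "1 - fps_X ^ j = join_trisection (1 - fps_X ^ m) 0 (0 :: 'a fps)"
      using j by (simp add: join_trisection_def fps_compose_sub_distrib fps_X_power_compose_X_power)
    then show ?thesis
      using 1 by (simp add: trinorm_join_trisection m_def mod_0_imp_dvd)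
  next
    case 2
    then have "1 - fps_X ^ j = join_trisection 1 (- (fps_X ^ m)) (0 :: 'a fps)"
      using j by (simp add: join_trisection_def fps_compose_uminus fps_X_power_compose_X_power
          power_add)
    moreover have "fps_X * (- (fps_X ^ m)) ^ 3 = - (fps_X ^ j :: 'a fps)"
      using j 2 by (simp add: power_add power_mult[symmetric] mult.commute)
    ultimately show ?thesis
      using 2 by (simp add: trinorm_join_trisection dvd_eq_mod_eq_0)
  next
    case 3
    then have "1 - fps_X ^ j = join_trisection 1 0 (- (fps_X ^ m) :: 'a fps)"
      using j by (simp add: join_trisection_def fps_compose_uminus fps_X_power_compose_X_power
          power_add power2_eq_square)
    moreover have "fps_X ^ 2 * (- (fps_X ^ m)) ^ 3 = - (fps_X ^ j :: 'a fps)"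
      using j 3 by (simp add: power_add power_mult[symmetric] mult.commute power2_eq_square)
    ultimately show ?thesis
      using 3 by (simp add: trinorm_join_trisection dvd_eq_mod_eq_0)
  qed
qed

lemma trinorm_qpochhammer:
  assumes "\<not> 3 dvd m"
  shows "trinorm (qpochhammer (fps_X ^ m) (3 * N)) * qpochhammer (fps_X ^ (3 * m)) N
    = qpochhammer (fps_X ^ m) (3 * N) * (qpochhammer (fps_X ^ m) N ^ 3 :: 'a::idom fps)"
proof (induction N)
  case 0
  then show ?case by (simp add: qpochhammer_def)
next
  case (Suc N)
  define f1 :: "'a fps" where "f1 = 1 - (fps_X ^ m) ^ Suc (3 * N)"
  define f2 :: "'a fps" where "f2 = 1 - (fps_X ^ m) ^ Suc (Suc (3 * N))"
  define f3 :: "'a fps" where "f3 = 1 - (fps_X ^ m) ^ Suc (Suc (Suc (3 * N)))"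
  define g :: "'a fps" where "g = 1 - (fps_X ^ m) ^ Suc N"
  have "m * Suc (3 * N) = m + 3 * (m * N)" "m * Suc (Suc (3 * N)) = 2 * m + 3 * (m * N)"
    by (simp_all add: algebra_simps)
  moreover have "\<not> 3 dvd m + 3 * k" "\<not> 3 dvd 2 * m + 3 * k" for k
    using assms by presburger+
  ultimately have "\<not> 3 dvd m * Suc (3 * N)" "\<not> 3 dvd m * Suc (Suc (3 * N))"
    by (simp_all only: not_False_eq_True)
  then have norm_f1: "trinorm f1 = f1" and norm_f2: "trinorm f2 = f2"
    by (simp_all add: f1_def f2_def trinorm_one_minus_X_power power_mult[symmetric] del: power_Suc)
  have "m * Suc (Suc (Suc (3 * N))) = 3 * (m * Suc N)"
    by (simp add: algebra_simps)
  then have f3_eq: "f3 = 1 - fps_X ^ (3 * (m * Suc N))"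
    and cube_power: "(fps_X ^ (3 * m)) ^ Suc N = ((fps_X ^ m) ^ Suc (Suc (Suc (3 * N))) :: 'a fps)"
    by (simp_all only: f3_def power_mult[symmetric] mult.assoc)
  have norm_f3: "trinorm f3 = g ^ 3"
    by (simp add: f3_eq g_def trinorm_one_minus_X_power power_mult[symmetric] del: power_Suc)
  have "3 * Suc N = Suc (Suc (Suc (3 * N)))" by simp
  then have big: "qpochhammer (fps_X ^ m) (3 * Suc N) = qpochhammer (fps_X ^ m) (3 * N) * f1 * f2 * f3"
    by (simp only: qpochhammer_Suc f1_def f2_def f3_def)
  have small: "qpochhammer (fps_X ^ m) (Suc N) = qpochhammer (fps_X ^ m) N * g"
    by (simp only: qpochhammer_Suc g_def)
  have cube: "qpochhammer (fps_X ^ (3 * m)) (Suc N) = qpochhammer (fps_X ^ (3 * m)) N * f3"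
    by (simp only: qpochhammer_Suc f3_def cube_power)
  have "trinorm (qpochhammer (fps_X ^ m) (3 * Suc N)) * qpochhammer (fps_X ^ (3 * m)) (Suc N)
      = (trinorm (qpochhammer (fps_X ^ m) (3 * N)) * qpochhammer (fps_X ^ (3 * m)) N)
          * f1 * f2 * g ^ 3 * f3"
    by (simp only: big cube trinorm_mult norm_f1 norm_f2 norm_f3) (simp only: mult_ac)
  also have "\<dots> = qpochhammer (fps_X ^ m) (3 * Suc N) * qpochhammer (fps_X ^ m) (Suc N) ^ 3"
    by (simp only: Suc.IH big small power_mult_distrib) (simp only: mult_ac)
  finally show ?case .
qed

lemma trinorm_eulerE_at:
  assumes "\<not> 3 dvd m"
  shows "trinorm (eulerE_at m) * eulerE_at (3 * m) = eulerE_at m ^ 4"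
proof (rule fps_eq_if_agree_below)
  fix M :: nat
  have m: "m > 0" using assms by (rule contrapos_np) simp
  let ?qp = "qpochhammer (fps_X ^ m) :: nat \<Rightarrow> rat fps"
  have bound: "n \<le> k * Suc n" if "k > 0" for k n
  proof -
    have "1 * Suc n \<le> k * Suc n" using that by (intro mult_le_mono1) simp
    then show ?thesis by simp
  qed
  have "agree_below (3 * M) (eulerE_at m) (?qp (3 * M))"
    using m bound by (intro agree_below_eulerE_at) simp_all
  moreover have "agree_below M (eulerE_at (3 * m)) (qpochhammer (fps_X ^ (3 * m)) M)"
    using m bound[of "3 * m" M] by (intro agree_below_eulerE_at) simp_all
  ultimately have "agree_below M (trinorm (eulerE_at m) * eulerE_at (3 * m))
      (trinorm (?qp (3 * M)) * qpochhammer (fps_X ^ (3 * m)) M)"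
    by (intro agree_below_mult agree_below_trinorm)
  also have "trinorm (?qp (3 * M)) * qpochhammer (fps_X ^ (3 * m)) M = ?qp (3 * M) * ?qp M ^ 3"
    by (rule trinorm_qpochhammer[OF assms])
  also have "agree_below M \<dots> (eulerE_at m * eulerE_at m ^ 3)"
    using m bound[of m M] order_trans[OF _ bound[of m "3 * M"], of M]
    by (intro agree_below_mult agree_below_power agree_below_sym[OF agree_below_eulerE_at]) simp_all
  finally show "agree_below M (trinorm (eulerE_at m) * eulerE_at (3 * m)) (eulerE_at m ^ 4)"
    by (simp add: power_Suc[symmetric] numeral_eq_Suc del: power_Suc)
qed

section \<open>Trisection of the theta series\<close>

lemma theta_nth_eq_sum_roots: "theta $ i = (\<Sum>j | j ^ 2 = int i. (-1) ^ nat \<bar>j\<bar>)"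
proof -
  have "{j \<in> {-int i..int i}. j ^ 2 = int i} = {j. j ^ 2 = int i}"
  proof (intro equalityI subsetI)
    fix j assume j: "j \<in> {j. j ^ 2 = int i}"
    then have "\<bar>j\<bar> \<le> int i" using int_abs_le_square[of j] by simp
    with j show "j \<in> {j \<in> {-int i..int i}. j ^ 2 = int i}" by auto
  qed auto
  then show ?thesis
    by (simp add: theta_def sum.inter_filter[symmetric])
qed

lemma int_square_mod_3: "(j :: int) ^ 2 mod 3 = (if 3 dvd j then 0 else 1)"
proof -
  have square: "j ^ 2 mod 3 = (j mod 3) ^ 2 mod 3" by (simp add: power_mod)
  have "j mod 3 \<in> {0, 1, 2}" by auto
  then consider "j mod 3 = 0" | "j mod 3 = 1" | "j mod 3 = 2" by blast
  then show ?thesis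
    by cases (simp_all only: square, simp_all add: dvd_eq_mod_eq_0)
qed

lemma three_dvd_if_square_eq: "(j :: int) ^ 2 = 3 * k \<Longrightarrow> 3 dvd j"
  using int_square_mod_3[of j] by (auto split: if_splits)

lemma trisect_2_theta: "trisect 2 theta = 0"
proof -
  have "j ^ 2 \<noteq> int (3 * n + 2)" for j n
  proof
    assume "j ^ 2 = int (3 * n + 2)"
    then have "j ^ 2 mod 3 = 2" by simp
    then show False using int_square_mod_3[of j] by (simp split: if_splits)
  qed
  then show ?thesis
    by (simp add: fps_eq_iff trisect_def theta_nth_eq_sum_roots)
qed

lemma theta_nth_9_times: "theta $ (9 * m) = theta $ m"
proof -
  have roots: "{j. j ^ 2 = int (9 * m)} = (\<lambda>t. 3 * t) ` {t. t ^ 2 = int m}"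
  proof (intro equalityI subsetI)
    fix j assume "j \<in> {j. j ^ 2 = int (9 * m)}"
    then have sq: "j ^ 2 = 3 * (3 * int m)" by simp
    then obtain t where "j = 3 * t" using three_dvd_if_square_eq by blast
    with sq show "j \<in> (\<lambda>t. 3 * t) ` {t. t ^ 2 = int m}" by (auto simp: power_mult_distrib)
  qed (auto simp: power_mult_distrib)
  have "theta $ (9 * m) = (\<Sum>t | t ^ 2 = int m. (-1) ^ nat \<bar>3 * t\<bar>)"
    unfolding theta_nth_eq_sum_roots roots by (simp add: sum.reindex inj_on_def)
  also have "\<dots> = theta $ m"
    by (simp add: theta_nth_eq_sum_roots abs_mult nat_mult_distrib power_mult)
  finally show ?thesis .
qed

lemma theta_nth_3_times: "\<not> 3 dvd n \<Longrightarrow> theta $ (3 * n) = 0"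
proof -
  assume n: "\<not> 3 dvd n"
  have "j ^ 2 \<noteq> int (3 * n)" for j
  proof
    assume sq: "j ^ 2 = int (3 * n)"
    then obtain t where "j = 3 * t" using three_dvd_if_square_eq by fastforce
    with sq have "int n = 3 * t ^ 2" by (simp add: power_mult_distrib)
    with n show False by presburger
  qed
  then show ?thesis
    by (simp add: theta_nth_eq_sum_roots)
qed

lemma trisect_0_theta: "trisect 0 theta = theta oo fps_X ^ 3"
proof (rule fps_ext)
  fix n
  show "trisect 0 theta $ n = (theta oo fps_X ^ 3) $ n"
    by (cases "3 dvd n")
      (auto simp: trisect_def fps_compose_X_power_nth theta_nth_3_times theta_nth_9_times)
qed

lemma gauss_identity_compose_X_power:
  assumes "m > 0"
  shows "(theta oo fps_X ^ m) * eulerE_at (2 * m) = eulerE_at m ^ 2"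
proof -
  have "(theta oo fps_X ^ m) * eulerE_at (2 * m) = (theta * eulerE_at 2) oo fps_X ^ m"
    using assms by (simp add: fps_compose_mult_distrib eulerE_at_compose)
  also have "\<dots> = (eulerE oo fps_X ^ m) ^ 2"
    using assms by (simp add: gauss_identity fps_compose_power)
  finally show ?thesis
    by (simp only: eulerE_at_def)
qed

lemma trinorm_theta: "trinorm theta * (theta oo fps_X ^ 3) = theta ^ 4"
proof -
  let ?E = eulerE_at
  have E1: "trinorm (?E 1) * ?E 3 = ?E 1 ^ 4" and E2: "trinorm (?E 2) * ?E 6 = ?E 2 ^ 4"
    using trinorm_eulerE_at[of 1] trinorm_eulerE_at[of 2] by simp_all
  have theta_E: "theta * ?E 2 = ?E 1 ^ 2"
    by (simp only: gauss_identity eulerE_at_1)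
  have theta3_E: "(theta oo fps_X ^ 3) * ?E 6 = ?E 3 ^ 2"
    using gauss_identity_compose_X_power[of 3] by simp
  have "trinorm theta * trinorm (?E 2) = trinorm (?E 1) ^ 2"
    by (simp only: trinorm_mult[symmetric] trinorm_power[symmetric] theta_E)
  then have "(trinorm theta * (theta oo fps_X ^ 3)) * (?E 2 ^ 4 * ?E 6)
      = theta ^ 4 * (?E 2 ^ 4 * ?E 6)"
    using E1 E2 theta_E theta3_E by algebra
  moreover have "?E 2 ^ 4 * ?E 6 \<noteq> 0"
    by (rule fps_nonzeroI[of _ 0]) (simp add: fps_power_zeroth)
  ultimately show ?thesis by simp
qed

section \<open>The modular equation for X\<close>

lemma Xser_eq_theta: "Xser = ((theta oo fps_X ^ 3) * inverse theta) ^ 4"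
proof -
  let ?E = eulerE_at
  have unit: "inverse (?E m) * ?E m = 1" for m
    by (simp add: inverse_mult_eq_1)
  have "Xser = ?E 2 ^ 4 * ((theta oo fps_X ^ 3) * ?E 6) ^ 4 * inverse ((theta * ?E 2) ^ 4 * ?E 6 ^ 4)"
    unfolding Xser_def
    by (simp only: gauss_identity_compose_X_power[of 3, simplified] gauss_identity eulerE_at_1
        power_mult[symmetric]) simp
  also have "\<dots> = ((theta oo fps_X ^ 3) * inverse theta) ^ 4 * (inverse (?E 2) * ?E 2) ^ 4
      * (inverse (?E 6) * ?E 6) ^ 4"
    by (simp add: fps_inverse_mult fps_inverse_power power_mult_distrib ac_simps)
  finally show ?thesis by (simp only: unit power_one mult_1_right)
qed

lemma Xser_nth_0 [simp]: "Xser $ 0 = 1"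
  by (simp add: Xser_def fps_power_zeroth)

lemma theta_factorization:
  obtains c where "theta = (theta oo fps_X ^ 9) * (1 + fps_X * (c oo fps_X ^ 3))"
    and "Xser * (1 + fps_X * c ^ 3) = 1"
proof
  let ?t3 = "theta oo fps_X ^ 3" and ?b = "trisect 1 theta"
  let ?c = "?b * inverse ?t3"
  have t3_unit: "?t3 * inverse ?t3 = 1" and theta_unit: "theta * inverse theta = 1"
    by (simp_all add: inverse_mult_eq_1')
  have theta_join: "theta = join_trisection ?t3 ?b 0"
    using join_trisection_trisect[of theta] by (simp add: trisect_0_theta trisect_2_theta)
  have "(theta oo fps_X ^ 9) * (1 + fps_X * (?c oo fps_X ^ 3))
      = (?t3 oo fps_X ^ 3) + fps_X * ((?t3 * ?c) oo fps_X ^ 3)"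
    by (simp add: fps_compose_X_power_X_power fps_compose_mult_distrib algebra_simps)
  also have "?t3 * ?c = ?b"
    using t3_unit by (simp add: ac_simps)
  finally show "theta = (theta oo fps_X ^ 9) * (1 + fps_X * (?c oo fps_X ^ 3))"
    by (subst theta_join) (simp add: join_trisection_def)
  have "trinorm theta = ?t3 ^ 3 + fps_X * ?b ^ 3"
    by (subst theta_join) (simp add: trinorm_join_trisection)
  then have "(?t3 ^ 3 + fps_X * ?b ^ 3) * ?t3 = theta ^ 4"
    using trinorm_theta by simp
  then show "Xser * (1 + fps_X * ?c ^ 3) = 1"
    unfolding Xser_eq_theta using t3_unit theta_unit by algebra
qed

lemma Xser_eq_cube_compose:
  obtains c where
    "Xser = (Xser oo fps_X ^ 3) ^ 3 * ((1 - fps_X + fps_X ^ 2) ^ 4 oo (fps_X * (c oo fps_X ^ 3)))"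
    and "inverse Xser - 1 = fps_X * c ^ 3"
proof -
  obtain c where theta: "theta = (theta oo fps_X ^ 9) * (1 + fps_X * (c oo fps_X ^ 3))"
    and Xser_w: "Xser * (1 + fps_X * c ^ 3) = 1"
    by (rule theta_factorization)
  define T where "T = fps_X * (c oo fps_X ^ 3)"
  define Y where "Y = Xser oo fps_X ^ 3"
  have "inverse Xser = inverse Xser * (Xser * (1 + fps_X * c ^ 3))"
    by (simp add: Xser_w)
  then have w: "inverse Xser - 1 = fps_X * c ^ 3"
    by (simp add: mult.assoc[symmetric] inverse_mult_eq_1)
  have "(Xser * (1 + fps_X * c ^ 3)) oo fps_X ^ 3 = 1"
    by (simp add: Xser_w)
  then have Y_cube: "Y * (1 + T ^ 3) = 1"
    by (simp add: Y_def T_def fps_compose_mult_distrib fps_compose_add_distrib fps_compose_power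
        power_mult_distrib fps_X_power_compose_X_power)
  have "Y = ((theta oo fps_X ^ 9) * inverse (theta oo fps_X ^ 3)) ^ 4"
    unfolding Y_def Xser_eq_theta
    by (simp add: fps_compose_power[symmetric] fps_compose_mult_distrib fps_inverse_compose
        fps_compose_X_power_X_power)
  moreover have "theta * inverse theta = 1"
    and "(theta oo fps_X ^ 3) * inverse (theta oo fps_X ^ 3) = 1"
    by (simp_all add: inverse_mult_eq_1')
  ultimately have "Xser * (1 + T) ^ 4 * Y = 1"
    unfolding Xser_eq_theta using theta[folded T_def] by algebra
  then have "Xser = Y ^ 3 * (1 - T + T ^ 2) ^ 4"
    using Y_cube by algebra
  also have "(1 - T + T ^ 2) ^ 4 = (1 - fps_X + fps_X ^ 2) ^ 4 oo T"
    by (simp add: T_def fps_compose_power[symmetric] fps_compose_ring_simps)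
  finally show ?thesis
    using that w by (simp add: Y_def T_def)
qed

theorem opU_Xser_power:
  "opU (Xser ^ k)
    = Xser ^ (3 * k) * (opU ((1 - fps_X + fps_X ^ 2) ^ (4 * k)) oo (inverse Xser - 1))"
proof -
  obtain c where Xser: "Xser = (Xser oo fps_X ^ 3) ^ 3
      * ((1 - fps_X + fps_X ^ 2) ^ 4 oo (fps_X * (c oo fps_X ^ 3)))"
    and w: "inverse Xser - 1 = fps_X * c ^ 3"
    by (rule Xser_eq_cube_compose)
  have "Xser ^ k = (Xser ^ (3 * k) oo fps_X ^ 3)
      * ((1 - fps_X + fps_X ^ 2) ^ (4 * k) oo (fps_X * (c oo fps_X ^ 3)))"
    by (subst Xser) (simp add: power_mult_distrib fps_compose_power power_mult)
  then show ?thesis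
    unfolding opU_eq_trisect_0 w by (simp add: trisect_0_mult_compose trisect_0_compose)
qed

lemma opU_trinomial_power_4: "opU ((1 - fps_X + fps_X ^ 2) ^ 4) = 1 - 16 * fps_X + 10 * fps_X ^ 2"
proof -
  have "(1 - fps_X + fps_X ^ 2) ^ 4 = join_trisection (1 - 16 * fps_X + 10 * fps_X ^ 2)
      (- 4 + 19 * fps_X - 4 * fps_X ^ 2) (10 - 16 * fps_X + fps_X ^ 2 :: rat fps)"
    unfolding join_trisection_def by (simp add: fps_compose_ring_simps) algebra
  then show ?thesis
    by (simp add: opU_eq_trisect_0 trisect_join_trisection)
qed

lemma opU_trinomial_power_8:
  "opU ((1 - fps_X + fps_X ^ 2) ^ 8)
    = 1 - 112 * fps_X + 784 * fps_X ^ 2 - 1016 * fps_X ^ 3 + 266 * fps_X ^ 4 - 8 * fps_X ^ 5"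
proof -
  have "(1 - fps_X + fps_X ^ 2) ^ 8 = join_trisection
      (1 - 112 * fps_X + 784 * fps_X ^ 2 - 1016 * fps_X ^ 3 + 266 * fps_X ^ 4 - 8 * fps_X ^ 5)
      (- 8 + 266 * fps_X - 1016 * fps_X ^ 2 + 784 * fps_X ^ 3 - 112 * fps_X ^ 4 + fps_X ^ 5)
      (36 - 504 * fps_X + 1107 * fps_X ^ 2 - 504 * fps_X ^ 3 + 36 * fps_X ^ 4 :: rat fps)"
    unfolding join_trisection_def by (simp add: fps_compose_ring_simps) algebra
  then show ?thesis
    by (simp add: opU_eq_trisect_0 trisect_join_trisection)
qed

lemma opU_trinomial_power_12:
  "opU ((1 - fps_X + fps_X ^ 2) ^ 12)
    = 1 - 352 * fps_X + 8074 * fps_X ^ 2 - 43252 * fps_X ^ 3 + 73789 * fps_X ^ 4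
      - 43252 * fps_X ^ 5 + 8074 * fps_X ^ 6 - 352 * fps_X ^ 7 + fps_X ^ 8"
proof -
  have "(1 - fps_X + fps_X ^ 2) ^ 12 = join_trisection
      (1 - 352 * fps_X + 8074 * fps_X ^ 2 - 43252 * fps_X ^ 3 + 73789 * fps_X ^ 4
        - 43252 * fps_X ^ 5 + 8074 * fps_X ^ 6 - 352 * fps_X ^ 7 + fps_X ^ 8)
      (- 12 + 1221 * fps_X - 16236 * fps_X ^ 2 + 58278 * fps_X ^ 3 - 69576 * fps_X ^ 4
        + 28314 * fps_X ^ 5 - 3432 * fps_X ^ 6 + 78 * fps_X ^ 7)
      (78 - 3432 * fps_X + 28314 * fps_X ^ 2 - 69576 * fps_X ^ 3 + 58278 * fps_X ^ 4
        - 16236 * fps_X ^ 5 + 1221 * fps_X ^ 6 - 12 * fps_X ^ 7 :: rat fps)"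
    unfolding join_trisection_def by (simp add: fps_compose_ring_simps) algebra
  then show ?thesis
    by (simp add: opU_eq_trisect_0 trisect_join_trisection)
qed

lemma Xser_mult_inverse_minus_1:
  "(inverse Xser - 1) $ 0 = 0" "Xser * (inverse Xser - 1) = 1 - Xser"
  by (simp_all add: algebra_simps inverse_mult_eq_1')

lemma opU_Xser: "opU Xser = 10 * Xser - 36 * Xser ^ 2 + 27 * Xser ^ 3"
proof -
  define Z where "Z = inverse Xser - 1"
  have "opU Xser = Xser ^ 3 * (1 - 16 * Z + 10 * Z ^ 2)"
    using opU_Xser_power[of 1] Xser_mult_inverse_minus_1(1)
    by (simp add: opU_trinomial_power_4 fps_compose_ring_simps flip: Z_def)
  then show ?thesis
    using Xser_mult_inverse_minus_1(2)[folded Z_def] by algebra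
qed

lemma opU_Xser_square:
  "opU (Xser ^ 2) = - 8 * Xser + 306 * Xser ^ 2 - 2160 * Xser ^ 3 + 5508 * Xser ^ 4
    - 5832 * Xser ^ 5 + 2187 * Xser ^ 6"
proof -
  define Z where "Z = inverse Xser - 1"
  have "opU (Xser ^ 2)
      = Xser ^ 6 * (1 - 112 * Z + 784 * Z ^ 2 - 1016 * Z ^ 3 + 266 * Z ^ 4 - 8 * Z ^ 5)"
    using opU_Xser_power[of 2] Xser_mult_inverse_minus_1(1)
    by (simp add: opU_trinomial_power_8 fps_compose_ring_simps flip: Z_def)
  then show ?thesis
    using Xser_mult_inverse_minus_1(2)[folded Z_def] by algebra
qed

lemma opU_Xser_cube:
  "opU (Xser ^ 3) = Xser - 360 * Xser ^ 2 + 10566 * Xser ^ 3 - 99144 * Xser ^ 4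
    + 423549 * Xser ^ 5 - 944784 * Xser ^ 6 + 1141614 * Xser ^ 7 - 708588 * Xser ^ 8
    + 177147 * Xser ^ 9"
proof -
  define Z where "Z = inverse Xser - 1"
  have "opU (Xser ^ 3) = Xser ^ 9 * (1 - 352 * Z + 8074 * Z ^ 2 - 43252 * Z ^ 3 + 73789 * Z ^ 4
        - 43252 * Z ^ 5 + 8074 * Z ^ 6 - 352 * Z ^ 7 + Z ^ 8)"
    using opU_Xser_power[of 3] Xser_mult_inverse_minus_1(1)
    by (simp add: opU_trinomial_power_12 fps_compose_ring_simps flip: Z_def)
  then show ?thesis
    using Xser_mult_inverse_minus_1(2)[folded Z_def] by algebra
qed

theorem theorem2p3:
  shows "(opU Xser = 10 * Xser - 36 * Xser ^ 2 + 27 * Xser ^ 3) \<and>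
         (opU (Xser ^ 2) = - 8 * Xser + 306 * Xser ^ 2 - 2160 * Xser ^ 3 + 5508 * Xser ^ 4
                          - 5832 * Xser ^ 5 + 2187 * Xser ^ 6) \<and>
         (opU (Xser ^ 3) = Xser - 360 * Xser ^ 2 + 10566 * Xser ^ 3 - 99144 * Xser ^ 4
                          + 423549 * Xser ^ 5 - 944784 * Xser ^ 6 + 1141614 * Xser ^ 7
                          - 708588 * Xser ^ 8 + 177147 * Xser ^ 9)"
  using opU_Xser opU_Xser_square opU_Xser_cube by blast

end
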